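(* Let $R$ be a commutative generalized p.q.-Baer $*$-ring. Then (1) $GC(x)=GC(x^* )$ for every $x\in R$; (2) for $x,y\in R$, if $(xR)^ny=0$ for some $n\in\mathbb N$, then $GC(x)GC(y)=0$.
   Context: A $*$-ring is a ring with an involution; a projection is $e$ with $e=e^*=e^2$; projections are ordered by $e\le f\iff e=ef$. $r_R(S)=\{a\in R: sa=0\ \forall s\in S\}$. $R$ is a generalized p.q.-Baer $*$-ring if for every $x\in R$ there are $n\in\mathbb N$ and a projection $e$ with $r_R((xR)^n)=eR$. For $x\in R$, $GC(x)$ (generalized central cover) is the smallest central projection $e$ such that $x^ne=x^n$ for some $n\in\mathbb N$; it exists for every element of a generalized p.q.-Baer $*$-ring. *)

theory Defs
  imports Main
begin

definition is_involution :: "('a::comm_ring_1 \<Rightarrow> 'a) \<Rightarrow> bool" where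
  "is_involution star \<longleftrightarrow>
     (\<forall>x y. star (x + y) = star x + star y) \<and>
     (\<forall>x y. star (x * y) = star y * star x) \<and>
     (\<forall>x. star (star x) = x)"

definition is_projection :: "('a::comm_ring_1 \<Rightarrow> 'a) \<Rightarrow> 'a \<Rightarrow> bool" where
  "is_projection star e \<longleftrightarrow> e = star e \<and> e = e * e"

definition is_central :: "'a::comm_ring_1 \<Rightarrow> bool" where
  "is_central e \<longleftrightarrow> (\<forall>r. e * r = r * e)"

definition proj_le :: "'a::comm_ring_1 \<Rightarrow> 'a \<Rightarrow> bool" where
  "proj_le e f \<longleftrightarrow> e = e * f"

definition rann :: "'a::comm_ring_1 set \<Rightarrow> 'a set" where
  "rann S = {a. \<forall>s\<in>S. s * a = 0}"

definition rprinc :: "'a::comm_ring_1 \<Rightarrow> 'a set" where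
  "rprinc x = {x * r | r. True}"

inductive_set addclose :: "'a::comm_ring_1 set \<Rightarrow> 'a set" for A where
  zero: "0 \<in> addclose A"
| base: "a \<in> A \<Longrightarrow> a \<in> addclose A"
| add: "a \<in> addclose A \<Longrightarrow> b \<in> addclose A \<Longrightarrow> a + b \<in> addclose A"
| neg: "a \<in> addclose A \<Longrightarrow> - a \<in> addclose A"

definition set_mult :: "'a::comm_ring_1 set \<Rightarrow> 'a set \<Rightarrow> 'a set" where
  "set_mult A B = addclose {a * b | a b. a \<in> A \<and> b \<in> B}"

text \<open>(xR)^n for n \<ge> 1 (the value at 0 is irrelevant and never used).\<close>
fun rpow :: "'a::comm_ring_1 \<Rightarrow> nat \<Rightarrow> 'a set" where
  "rpow x 0 = UNIV"
| "rpow x (Suc 0) = rprinc x"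
| "rpow x (Suc (Suc n)) = set_mult (rpow x (Suc n)) (rprinc x)"

definition gen_pq_baer :: "('a::comm_ring_1 \<Rightarrow> 'a) \<Rightarrow> bool" where
  "gen_pq_baer star \<longleftrightarrow>
     (\<forall>x. \<exists>n\<ge>1. \<exists>e. is_projection star e \<and> rann (rpow x n) = rprinc e)"

definition is_GC :: "('a::comm_ring_1 \<Rightarrow> 'a) \<Rightarrow> 'a \<Rightarrow> 'a \<Rightarrow> bool" where
  "is_GC star x e \<longleftrightarrow>
     is_projection star e \<and> is_central e \<and> (\<exists>n\<ge>1. x ^ n * e = x ^ n) \<and>
     (\<forall>f. is_projection star f \<and> is_central f \<and> (\<exists>n\<ge>1. x ^ n * f = x ^ n)
          \<longrightarrow> proj_le e f)"

definition GC :: "('a::comm_ring_1 \<Rightarrow> 'a) \<Rightarrow> 'a \<Rightarrow> 'a" where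
  "GC star x = (THE e. is_GC star x e)"

end

theory Submission
  imports Defs
begin

text \<open>Write \<open>ann(x\<^sup>n)\<close> for the annihilator of \<open>x\<^sup>n\<close>; in a commutative ring it is the
  annihilator of \<open>(xR)\<^sup>n\<close>. If \<open>ann(x\<^sup>N) = eR\<close> with \<open>e\<close> idempotent, then \<open>x\<^sup>N e = 0\<close>, so
  \<open>x(x\<^sup>N a) = 0\<close> forces \<open>x\<^sup>N a \<in> eR\<close> and hence \<open>x\<^sup>N a = e x\<^sup>N a = 0\<close>: the chain of annihilators
  of powers of \<open>x\<close> stops growing at \<open>N\<close>. Consequently \<open>1 - e\<close> is the generalized central cover of
  \<open>x\<close>, and it kills every element that some power of \<open>x\<close> kills. The involution fixes
  projections and sends \<open>x\<^sup>n\<close> to \<open>(x\<^sup>*)\<^sup>n\<close>, which gives \<open>GC(x) = GC(x\<^sup>*)\<close>. If \<open>x\<^sup>n y = 0\<close>, then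
  \<open>GC(x) y = 0\<close>, so \<open>1 - GC(x)\<close> is a competitor in the definition of \<open>GC(y)\<close>, whence
  \<open>GC(y) \<le> 1 - GC(x)\<close>, i.e. \<open>GC(x) GC(y) = 0\<close>.\<close>

lemma addclose_dvd:
  fixes d :: "'a::comm_ring_1"
  assumes "a \<in> addclose A" and "\<And>b. b \<in> A \<Longrightarrow> d dvd b"
  shows "d dvd a"
  using assms by (induction rule: addclose.induct) auto

lemma power_dvd_rpow:
  fixes x :: "'a::comm_ring_1"
  assumes "n \<ge> 1" and "s \<in> rpow x n"
  shows "x ^ n dvd s"
  using assms
proof (induction x n arbitrary: s rule: rpow.induct)
  case (3 x n)
  show ?case
    using \<open>s \<in> rpow x (Suc (Suc n))\<close> unfolding rpow.simps set_mult_def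
  proof (rule addclose_dvd)
    fix b assume "b \<in> {a * c |a c. a \<in> rpow x (Suc n) \<and> c \<in> rprinc x}"
    then obtain a c where "b = a * c" "a \<in> rpow x (Suc n)" "c \<in> rprinc x" by blast
    moreover from \<open>a \<in> rpow x (Suc n)\<close> have "x ^ Suc n dvd a" using "3.IH" by simp
    moreover from \<open>c \<in> rprinc x\<close> have "x dvd c" by (auto simp: rprinc_def)
    ultimately show "x ^ Suc (Suc n) dvd b" by (metis mult_dvd_mono power_Suc2)
  qed
qed (auto simp: rprinc_def)

lemma power_in_rpow:
  fixes x :: "'a::comm_ring_1"
  assumes "n \<ge> 1"
  shows "x ^ n \<in> rpow x n"
  using assms
proof (induction x n rule: rpow.induct)
  case (3 x n)
  have "x \<in> rprinc x" by (auto simp: rprinc_def intro: exI[of _ 1])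
  moreover have "x ^ Suc n \<in> rpow x (Suc n)" using "3.IH" by simp
  ultimately have "x ^ Suc n * x \<in> {a * c |a c. a \<in> rpow x (Suc n) \<and> c \<in> rprinc x}"
    by blast
  then show ?case by (simp add: set_mult_def addclose.base mult.commute)
qed (auto simp: rprinc_def intro: exI[of _ 1])

lemma rann_rpow:
  fixes x :: "'a::comm_ring_1"
  assumes "n \<ge> 1"
  shows "rann (rpow x n) = {a. x ^ n * a = 0}"
proof (intro set_eqI iffI)
  fix a assume "a \<in> rann (rpow x n)"
  then show "a \<in> {a. x ^ n * a = 0}"
    using power_in_rpow[OF assms] unfolding rann_def by blast
next
  fix a assume "a \<in> {a. x ^ n * a = 0}"
  have "s * a = 0" if s: "s \<in> rpow x n" for s
  proof -
    obtain k where "s = x ^ n * k" using power_dvd_rpow[OF assms s] by (rule dvdE)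
    then have "s * a = k * (x ^ n * a)" by (simp add: ac_simps)
    then show ?thesis using \<open>a \<in> {a. x ^ n * a = 0}\<close> by simp
  qed
  then show "a \<in> rann (rpow x n)" unfolding rann_def by blast
qed

lemma rprinc_self: "e \<in> rprinc e"
  unfolding rprinc_def by (auto intro: exI[of _ 1])

lemma annihilator_power_stable:
  fixes x :: "'a::comm_ring_1"
  assumes "N \<ge> 1" and "e * e = e" and ann: "{a. x ^ N * a = 0} = rprinc e"
    and "x ^ m * a = 0"
  shows "x ^ N * a = 0"
  using \<open>x ^ m * a = 0\<close>
proof (induction m arbitrary: a)
  case 0
  then show ?case by simp
next
  case (Suc m)
  have e_fixes_ann: "e * b = b" if b: "x ^ N * b = 0" for b
  proof -
    obtain r where "b = e * r" using b ann by (auto simp: rprinc_def)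
    then show ?thesis using \<open>e * e = e\<close> by (simp add: mult.assoc[symmetric])
  qed
  have "x ^ N * e = 0"
    using rprinc_self[of e] unfolding ann[symmetric] by simp
  from Suc.prems have "x ^ N * (x * a) = 0"
    using Suc.IH[of "x * a"] by (simp add: algebra_simps)
  then have "x * (x ^ N * a) = 0" by (simp add: mult.left_commute)
  moreover obtain k where "N = Suc k" using \<open>N \<ge> 1\<close> by (cases N) auto
  then have "x ^ N * (x ^ N * a) = x ^ k * (x * (x ^ N * a))"
    by (subst (1) \<open>N = Suc k\<close>) (simp add: power_Suc2 mult.assoc)
  ultimately have "x ^ N * (x ^ N * a) = 0" by simp
  then have "x ^ N * a = e * (x ^ N * a)" using e_fixes_ann by simp
  also have "\<dots> = 0" using \<open>x ^ N * e = 0\<close> by (simp add: algebra_simps)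
  finally show ?case .
qed

lemma involution_mult:
  assumes "is_involution star"
  shows "star (a * b) = star a * star b"
  using assms unfolding is_involution_def by (simp add: mult.commute)

lemma involution_involutive:
  assumes "is_involution star"
  shows "star (star a) = a"
  using assms unfolding is_involution_def by simp

lemma involution_one:
  assumes "is_involution star"
  shows "star 1 = 1"
proof -
  have "star 1 = star 1 * star (star 1)" using involution_involutive[OF assms] by simp
  also have "\<dots> = star (1 * star 1)" by (rule involution_mult[OF assms, symmetric])
  finally show ?thesis using involution_involutive[OF assms] by simp
qed

lemma involution_power:
  assumes "is_involution star"
  shows "star (a ^ k) = star a ^ k"
  by (induction k) (simp_all add: involution_one[OF assms] involution_mult[OF assms])

lemma is_projection_one_minus:
  assumes "is_involution star" and "is_projection star e"
  shows "is_projection star (1 - e)"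
proof -
  have "star (1 - e) + star e = star 1"
    using assms(1) unfolding is_involution_def by (metis diff_add_cancel)
  then have "star (1 - e) = 1 - e"
    using assms involution_one unfolding is_projection_def by (metis eq_diff_eq)
  moreover have "(1 - e) * (1 - e) = 1 - e"
    using assms(2) unfolding is_projection_def by (simp add: algebra_simps)
  ultimately show ?thesis unfolding is_projection_def by simp
qed

lemma is_central_comm: "is_central (e :: 'a::comm_ring_1)"
  by (simp add: is_central_def mult.commute)

lemma is_GC_unique:
  assumes "is_GC star x g" and "is_GC star x h"
  shows "g = h"
proof -
  have "proj_le g h" and "proj_le h g" using assms unfolding is_GC_def by blast+
  then show ?thesis unfolding proj_le_def by (simp add: mult.commute)
qed

lemma GC_eqI:
  assumes "is_GC star x g"
  shows "GC star x = g"
  unfolding GC_def using assms is_GC_unique by blast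

lemma power_mult_projection_star_iff:
  assumes "is_involution star" and "is_projection star f"
  shows "star x ^ n * f = star x ^ n \<longleftrightarrow> x ^ n * f = x ^ n"
  using assms(2) involution_power[OF assms(1)] involution_mult[OF assms(1)]
    involution_involutive[OF assms(1)] unfolding is_projection_def by metis

lemma is_GC_star:
  assumes "is_involution star" and "is_GC star x g"
  shows "is_GC star (star x) g"
  using assms(2) unfolding is_GC_def
  by (fastforce simp: power_mult_projection_star_iff[OF assms(1)])

lemma GC_star:
  assumes "is_involution star" and "is_GC star x g"
  shows "GC star (star x) = GC star x"
  using GC_eqI assms is_GC_star by metis

lemma is_GC_one_minus_annihilator:
  fixes star :: "'a::comm_ring_1 \<Rightarrow> 'a"
  assumes "is_involution star" and "N \<ge> 1" and e: "is_projection star e"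
    and ann: "{a. x ^ N * a = 0} = rprinc e"
  shows "is_GC star x (1 - e)"
    and "x ^ m * a = 0 \<Longrightarrow> (1 - e) * a = 0"
proof -
  have "e * e = e" using e unfolding is_projection_def by simp
  have one_minus_kills: "(1 - e) * a = 0" if "x ^ m * a = 0" for m a
  proof -
    have "x ^ N * a = 0"
      using annihilator_power_stable[OF \<open>N \<ge> 1\<close> \<open>e * e = e\<close> ann that] .
    then obtain r where "a = e * r" using ann by (auto simp: rprinc_def)
    then have "(1 - e) * a = (e - e * e) * r" by (simp add: algebra_simps)
    then show ?thesis using \<open>e * e = e\<close> by simp
  qed
  then show "x ^ m * a = 0 \<Longrightarrow> (1 - e) * a = 0" .
  have "x ^ N * e = 0" using rprinc_self[of e] unfolding ann[symmetric] by simp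
  then have "x ^ N * (1 - e) = x ^ N" by (simp add: algebra_simps)
  moreover have "proj_le (1 - e) f" if "x ^ n * f = x ^ n" for f n
  proof -
    have "x ^ n * (1 - f) = 0" using that by (simp add: algebra_simps)
    then have "(1 - e) * (1 - f) = 0" by (rule one_minus_kills)
    then show ?thesis unfolding proj_le_def by (simp add: algebra_simps)
  qed
  ultimately show "is_GC star x (1 - e)"
    using assms(1) e \<open>N \<ge> 1\<close> unfolding is_GC_def
    by (metis is_projection_one_minus is_central_comm)
qed

lemma GC_exists_and_annihilates:
  fixes star :: "'a::comm_ring_1 \<Rightarrow> 'a"
  assumes "is_involution star" and "gen_pq_baer star"
  shows "is_GC star x (GC star x)"
    and "x ^ m * a = 0 \<Longrightarrow> GC star x * a = 0"
proof -
  obtain N e where "N \<ge> 1" and "is_projection star e" and "rann (rpow x N) = rprinc e"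
    using assms(2) unfolding gen_pq_baer_def by blast
  then have ann: "{a. x ^ N * a = 0} = rprinc e" using rann_rpow by metis
  note cover = is_GC_one_minus_annihilator[OF assms(1) \<open>N \<ge> 1\<close> \<open>is_projection star e\<close> ann]
  show "is_GC star x (GC star x)" using cover(1) GC_eqI by metis
  show "x ^ m * a = 0 \<Longrightarrow> GC star x * a = 0" using cover GC_eqI by metis
qed

lemma GC_mult_GC_eq_zero:
  fixes star :: "'a::comm_ring_1 \<Rightarrow> 'a"
  assumes "is_involution star" and "gen_pq_baer star" and "x ^ n * y = 0"
  shows "GC star x * GC star y = 0"
proof -
  note GC_x = GC_exists_and_annihilates[OF assms(1,2), of x]
  note GC_y = GC_exists_and_annihilates[OF assms(1,2), of y]
  have "GC star x * y = 0" using GC_x(2) assms(3) .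
  then have "y ^ 1 * (1 - GC star x) = y ^ 1" by (simp add: algebra_simps)
  moreover have "is_projection star (1 - GC star x)"
    using GC_x(1) is_projection_one_minus[OF assms(1)] unfolding is_GC_def by blast
  ultimately have "proj_le (GC star y) (1 - GC star x)"
    using GC_y(1) is_central_comm unfolding is_GC_def by blast
  then show ?thesis unfolding proj_le_def by (simp add: algebra_simps)
qed

theorem mainTheorem6:
  fixes star :: "'a::comm_ring_1 \<Rightarrow> 'a"
  assumes "is_involution star"
    and "gen_pq_baer star"
  shows "(\<forall>x. GC star x = GC star (star x)) \<and>
         (\<forall>x y. (\<exists>n\<ge>1. \<forall>s\<in>rpow x n. s * y = 0) \<longrightarrow> GC star x * GC star y = 0)"
proof (intro conjI allI impI)
  fix x
  show "GC star x = GC star (star x)"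
    using GC_star[OF assms(1) GC_exists_and_annihilates(1)[OF assms]] by simp
next
  fix x y :: 'a
  assume "\<exists>n\<ge>1. \<forall>s\<in>rpow x n. s * y = 0"
  then obtain n where "n \<ge> 1" and "\<forall>s\<in>rpow x n. s * y = 0" by blast
  then have "x ^ n * y = 0" using power_in_rpow by blast
  then show "GC star x * GC star y = 0" using GC_mult_GC_eq_zero[OF assms] by blast
qed

end
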